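(* Let $t\ge1$ and $n=t+1$. The gadget $\mathtt{SecMultSub}$ defined below is $t$-NI secure. $\mathtt{SecMultSub}$ takes as input Boolean sharings $(\mathbf{x}_i)$, $(\mathbf{y}_i)$ of vectors $\mathbf{x},\mathbf{y}\in\mathbb{F}_q^l$ and a Boolean sharing $(c_i)$ of $c\in\mathbb{F}_q$, and computes: for $j=1,\dots,l$: $(\mathbf{t}[j]_i):=\mathtt{SecMult}((\mathbf{x}[j]_i),(c_i))$ and $\mathbf{z}[j]_i:=\mathbf{y}[j]_i-\mathbf{t}[j]_i$ for every $i$. It returns $(\mathbf{z}_i)$.
   Context: A Boolean sharing of $x\in\mathbb{F}_q$ is a tuple $(x_1,\dots,x_n)$ with $x=x_1+\cdots+x_n$ (field addition); vectors are shared coordinate-wise, and $\mathbf{v}[j]$ is the $j$-th coordinate. $\mathtt{SecMult}$ is the ISW masked multiplication gadget, taking Boolean sharings of $a,b\in\mathbb{F}_q$ and returning a Boolean sharing of $a\cdot b$; it is $t$-SNI. Probing model: an adversary may place probes on intermediate values (internal wires) of a gadget and on its output shares. A gadget with one output sharing and some input sharings is $t$-NI (resp. $t$-SNI) secure if any set of at most $t_1$ probes on internal wires and $t_2$ probes on output shares, with $t_1+t_2\le t$, can be perfectly simulated using at most $t_1+t_2$ (resp. $t_1$) shares of each of its input sharings. *)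

theory Defs
  imports "HOL-Probability.Probability"
begin

text \<open>Share indices are 0..<n, vector coordinates are 0..<l.
  A Boolean (additive) sharing of a field element is a function nat => 'a
  (share i = value at i < n); a sharing of a vector in F_q^l is
  xs :: nat => nat => 'a, where xs i j is coordinate j of share i.\<close>

datatype isw_wire =
    IA nat
  | IB nat
  | IR nat nat
  | IP nat nat
  | ID nat nat
  | IS nat nat      \<comment> \<open>partial sum of c_i after the terms k<m; IS i n = output share c_i\<close>

definition isw_r :: "(nat \<Rightarrow> 'a::field) \<Rightarrow> (nat \<Rightarrow> 'a) \<Rightarrow> (nat \<times> nat \<Rightarrow> 'a) \<Rightarrow> nat \<Rightarrow> nat \<Rightarrow> 'a" where
  "isw_r a b r i k = (if i < k then r (i, k) else (a k * b i - r (k, i)) + a i * b k)"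

fun isw_val :: "(nat \<Rightarrow> 'a::field) \<Rightarrow> (nat \<Rightarrow> 'a) \<Rightarrow> (nat \<times> nat \<Rightarrow> 'a) \<Rightarrow> isw_wire \<Rightarrow> 'a" where
  "isw_val a b r (IA i) = a i"
| "isw_val a b r (IB i) = b i"
| "isw_val a b r (IR i k) = isw_r a b r i k"
| "isw_val a b r (IP i k) = a i * b k"
| "isw_val a b r (ID i k) = a k * b i - r (k, i)"
| "isw_val a b r (IS i m) = a i * b i + (\<Sum>k \<in> {..<m} - {i}. isw_r a b r i k)"

definition isw_valid :: "nat \<Rightarrow> isw_wire \<Rightarrow> bool" where
  "isw_valid n w = (case w of
      IA i \<Rightarrow> i < n
    | IB i \<Rightarrow> i < n
    | IR i k \<Rightarrow> i < n \<and> k < n \<and> i \<noteq> k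
    | IP i k \<Rightarrow> i < n \<and> k < n
    | ID i k \<Rightarrow> k < i \<and> i < n
    | IS i m \<Rightarrow> i < n \<and> m \<le> n)"

datatype sub_wire =
    M nat isw_wire   \<comment> \<open>wire of the j-th SecMult instance (computing t[j] from x[j] and c)\<close>
  | YW nat nat
  | ZW nat nat

definition sub_valid :: "nat \<Rightarrow> nat \<Rightarrow> sub_wire \<Rightarrow> bool" where
  "sub_valid l n w = (case w of
      M j v \<Rightarrow> j < l \<and> isw_valid n v
    | YW j i \<Rightarrow> j < l \<and> i < n
    | ZW j i \<Rightarrow> j < l \<and> i < n)"

text \<open>Random tape: rho (j,i,k) for j<l, i<k<n is the ISW randomness r_ik of the
  j-th SecMult instance; all independent and uniform on F_q.\<close>
definition sub_tape :: "nat \<Rightarrow> nat \<Rightarrow> (nat \<times> nat \<times> nat \<Rightarrow> 'a::{field,finite}) pmf" where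
  "sub_tape l n = Pi_pmf {(j, i, k). j < l \<and> i < k \<and> k < n} 0 (\<lambda>_. pmf_of_set UNIV)"

fun sub_val :: "nat \<Rightarrow> (nat \<Rightarrow> nat \<Rightarrow> 'a::field) \<Rightarrow> (nat \<Rightarrow> nat \<Rightarrow> 'a) \<Rightarrow> (nat \<Rightarrow> 'a)
    \<Rightarrow> (nat \<times> nat \<times> nat \<Rightarrow> 'a) \<Rightarrow> sub_wire \<Rightarrow> 'a" where
  "sub_val n xs ys c rho (M j v) = isw_val (\<lambda>i. xs i j) c (\<lambda>(i, k). rho (j, i, k)) v"
| "sub_val n xs ys c rho (YW j i) = ys i j"
| "sub_val n xs ys c rho (ZW j i) =
     ys i j - isw_val (\<lambda>i. xs i j) c (\<lambda>(i, k). rho (j, i, k)) (IS i n)"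

definition sub_obs :: "nat \<Rightarrow> nat \<Rightarrow> (nat \<Rightarrow> nat \<Rightarrow> 'a::{field,finite}) \<Rightarrow> (nat \<Rightarrow> nat \<Rightarrow> 'a)
    \<Rightarrow> (nat \<Rightarrow> 'a) \<Rightarrow> sub_wire set \<Rightarrow> (sub_wire \<Rightarrow> 'a) pmf" where
  "sub_obs l n xs ys c P = map_pmf (\<lambda>rho. \<lambda>w\<in>P. sub_val n xs ys c rho w) (sub_tape l n)"

text \<open>t-NI: any set of at most t probes (internal wires or output shares; for NI
  the two kinds are counted together) can be perfectly simulated from at most
  |P| shares of each input sharing (x, y, c).\<close>
definition SecMultSub_NI :: "'a::{field,finite} itself \<Rightarrow> nat \<Rightarrow> nat \<Rightarrow> nat \<Rightarrow> bool" where
  "SecMultSub_NI _ l n t =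
    (\<forall>P. finite P \<and> P \<subseteq> {w. sub_valid l n w} \<and> card P \<le> t \<longrightarrow>
      (\<exists>Ix Iy Ic. Ix \<subseteq> {..<n} \<and> Iy \<subseteq> {..<n} \<and> Ic \<subseteq> {..<n} \<and>
         card Ix \<le> card P \<and> card Iy \<le> card P \<and> card Ic \<le> card P \<and>
         (\<exists>Sim :: (nat \<Rightarrow> nat \<Rightarrow> 'a) \<Rightarrow> (nat \<Rightarrow> nat \<Rightarrow> 'a) \<Rightarrow> (nat \<Rightarrow> 'a) \<Rightarrow> (sub_wire \<Rightarrow> 'a) pmf.
           \<forall>(xs :: nat \<Rightarrow> nat \<Rightarrow> 'a) ys c.
             sub_obs l n xs ys c P =
             Sim (\<lambda>i\<in>Ix. \<lambda>j\<in>{..<l}. xs i j) (\<lambda>i\<in>Iy. \<lambda>j\<in>{..<l}. ys i j) (\<lambda>i\<in>Ic. c i))))"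

end

theory Submission
  imports Defs
begin

text \<open>Fix a probe set P and call row i of the j-th ISW instance probed if some r_ik,
  partial sum of c_i, or output share z[j]_i of that instance is probed. The simulator
  receives at most one share of each input sharing per probe, chosen so that they include
  x[j]_i and c_i for every probed row i of every instance j. If two inputs agree on these
  shares, translating each random r_pq (p < q) of instance j by a suitable correction makes
  every probed wire of the second execution equal to the same wire of the first. Translation
  is a bijection of the uniform tape, so both executions induce the same distribution on the
  probes, and the simulator can run the gadget on the received shares padded with zeros.\<close>

definition translate_on :: "'b set \<Rightarrow> ('b \<Rightarrow> 'a::ab_group_add) \<Rightarrow> ('b \<Rightarrow> 'a) \<Rightarrow> 'b \<Rightarrow> 'a" where
  "translate_on D \<delta> \<rho> = (\<lambda>x. if x \<in> D then \<rho> x + \<delta> x else 0)"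

lemma map_pmf_translate_on_uniform:
  fixes \<delta> :: "'b \<Rightarrow> 'a::{ab_group_add,finite}"
  assumes "finite D"
  shows "map_pmf (translate_on D \<delta>) (Pi_pmf D 0 (\<lambda>_. pmf_of_set UNIV))
       = Pi_pmf D 0 (\<lambda>_. pmf_of_set UNIV)"
proof -
  let ?S = "PiE_dflt D (0::'a) (\<lambda>_. UNIV)"
  have Pi_pmf_eq: "Pi_pmf D 0 (\<lambda>_. pmf_of_set UNIV) = pmf_of_set ?S"
    using assms by (intro Pi_pmf_of_set) auto
  have "bij_betw (translate_on D \<delta>) ?S ?S"
    by (rule bij_betwI[of _ _ _ "translate_on D (\<lambda>x. - \<delta> x)"])
       (auto simp: translate_on_def PiE_dflt_def fun_eq_iff)
  moreover have "?S \<noteq> {}"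
    by (auto simp: PiE_dflt_def intro!: exI[of _ "\<lambda>_. 0"])
  moreover have "finite ?S"
    using assms by (simp flip: dflt_image_PiE add: finite_PiE)
  ultimately show ?thesis
    unfolding Pi_pmf_eq by (rule map_pmf_of_set_bij_betw)
qed

lemma finite_sub_tape_domain: "finite {(j, i, k). j < (l::nat) \<and> i < k \<and> k < (n::nat)}"
proof (rule finite_subset)
  show "{(j, i, k). j < l \<and> i < k \<and> k < n} \<subseteq> {..<l} \<times> {..<n} \<times> {..<n}"
    by auto
qed simp

lemma map_pmf_translate_on_sub_tape:
  "map_pmf (translate_on {(j, i, k). j < l \<and> i < k \<and> k < n} \<delta>) (sub_tape l n) = sub_tape l n"
  unfolding sub_tape_def by (rule map_pmf_translate_on_uniform[OF finite_sub_tape_domain])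

lemma card_UN_le_card:
  assumes "finite P" "\<And>w. w \<in> P \<Longrightarrow> card (f w) \<le> 1"
  shows "card (\<Union>w\<in>P. f w) \<le> card P"
proof -
  have "card (\<Union>w\<in>P. f w) \<le> (\<Sum>w\<in>P. card (f w))"
    using assms(1) by (rule card_UN_le)
  also have "\<dots> \<le> (\<Sum>w\<in>P. 1)"
    using assms(2) by (rule sum_mono)
  finally show ?thesis by simp
qed

text \<open>The translation of r_pq (p < q) when the rows in K are probed: r_pq itself is kept
  if p is probed, r_qp if only q is, and the wire a_p b_q - r_pq otherwise.\<close>
definition isw_correction ::
    "(nat \<Rightarrow> 'a) \<Rightarrow> (nat \<Rightarrow> 'a) \<Rightarrow> (nat \<Rightarrow> 'a) \<Rightarrow> (nat \<Rightarrow> 'a) \<Rightarrow> nat set \<Rightarrow> nat \<Rightarrow> nat \<Rightarrow> 'a::field" where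
  "isw_correction a b a' b' K p q =
    (if p \<in> K then 0
     else if q \<in> K then (a' p * b' q + a' q * b' p) - (a p * b q + a q * b p)
     else a' p * b' q - a p * b q)"

fun isw_rows :: "isw_wire \<Rightarrow> nat set" where
  "isw_rows (IR i k) = {i}"
| "isw_rows (IS i m) = {i}"
| "isw_rows _ = {}"

fun isw_a_shares :: "isw_wire \<Rightarrow> nat set" where
  "isw_a_shares (IA i) = {i}"
| "isw_a_shares (IR i k) = {i}"
| "isw_a_shares (IP i k) = {i}"
| "isw_a_shares (IS i m) = {i}"
| "isw_a_shares _ = {}"

fun isw_b_shares :: "nat set \<Rightarrow> isw_wire \<Rightarrow> nat set" where
  "isw_b_shares K (IA i) = {}"
| "isw_b_shares K (IB i) = {i}"
| "isw_b_shares K (IR i k) = {i}"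
| "isw_b_shares K (IP i k) = {k}"
| "isw_b_shares K (ID i k) = (if k \<in> K then {i} else if i \<in> K then {k} else {})"
| "isw_b_shares K (IS i m) = {i}"

lemma isw_rows_subset_shares:
  "isw_rows v \<subseteq> isw_a_shares v" "isw_rows v \<subseteq> isw_b_shares K v"
  by (cases v; simp)+

lemma card_isw_shares_le:
  "card (isw_a_shares v) \<le> 1" "card (isw_b_shares K v) \<le> 1"
  by (cases v; simp)+

lemma isw_shares_valid:
  "isw_valid n v \<Longrightarrow> isw_a_shares v \<subseteq> {..<n}"
  "isw_valid n v \<Longrightarrow> isw_b_shares K v \<subseteq> {..<n}"
  by (cases v; auto simp: isw_valid_def)+

lemma isw_r_corrected:
  fixes a b a' b' :: "nat \<Rightarrow> 'a::field"
  assumes agree_K: "\<forall>p\<in>K. a p = a' p \<and> b p = b' p"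
    and "i \<in> K" "i \<noteq> k" "i < n" "k < n"
    and corrected: "\<And>p q. p < q \<Longrightarrow> q < n \<Longrightarrow>
      r' (p, q) = r (p, q) + isw_correction a b a' b' K p q"
  shows "isw_r a' b' r' i k = isw_r a b r i k"
proof (cases "i < k")
  case True
  then show ?thesis
    using corrected[of i k] assms(2,5) by (simp add: isw_r_def isw_correction_def)
next
  case False
  then have "k < i" using \<open>i \<noteq> k\<close> by simp
  then show ?thesis
    using corrected[of k i] agree_K assms(2,4)
    by (cases "k \<in> K") (simp_all add: isw_r_def isw_correction_def algebra_simps)
qed

lemma isw_val_corrected:
  fixes a b a' b' :: "nat \<Rightarrow> 'a::field"
  assumes valid: "isw_valid n v"
    and rows: "isw_rows v \<subseteq> K"
    and agree_K: "\<forall>p\<in>K. a p = a' p \<and> b p = b' p"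
    and agree_a: "\<forall>p\<in>isw_a_shares v. a p = a' p"
    and agree_b: "\<forall>p\<in>isw_b_shares K v. b p = b' p"
    and corrected: "\<And>p q. p < q \<Longrightarrow> q < n \<Longrightarrow>
      r' (p, q) = r (p, q) + isw_correction a b a' b' K p q"
  shows "isw_val a' b' r' v = isw_val a b r v"
proof (cases v)
  case (IR i k)
  then show ?thesis
    using valid rows by (auto simp: isw_valid_def intro: isw_r_corrected[OF agree_K _ _ _ _ corrected])
next
  case (ID i k)
  then have "k < i" "i < n" using valid by (auto simp: isw_valid_def)
  then show ?thesis
    using ID corrected[of k i] agree_K agree_b
    by (auto simp: isw_correction_def algebra_simps split: if_splits)
next
  case (IS i m)
  then have "i \<in> K" "i < n" "m \<le> n" using valid rows by (auto simp: isw_valid_def)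
  then have "(\<Sum>k\<in>{..<m} - {i}. isw_r a' b' r' i k) = (\<Sum>k\<in>{..<m} - {i}. isw_r a b r i k)"
    by (intro sum.cong refl isw_r_corrected[OF agree_K _ _ _ _ corrected]) auto
  then show ?thesis
    using IS \<open>i \<in> K\<close> agree_K by simp
qed (use agree_a agree_b in simp_all)

definition probed_rows :: "nat \<Rightarrow> sub_wire set \<Rightarrow> nat set" where
  "probed_rows j P = (\<Union>v\<in>{v. M j v \<in> P}. isw_rows v) \<union> {i. ZW j i \<in> P}"

fun sub_x_shares :: "sub_wire \<Rightarrow> nat set" where
  "sub_x_shares (M j v) = isw_a_shares v"
| "sub_x_shares (YW j i) = {}"
| "sub_x_shares (ZW j i) = {i}"

fun sub_y_shares :: "sub_wire \<Rightarrow> nat set" where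
  "sub_y_shares (M j v) = {}"
| "sub_y_shares (YW j i) = {i}"
| "sub_y_shares (ZW j i) = {i}"

fun sub_c_shares :: "sub_wire set \<Rightarrow> sub_wire \<Rightarrow> nat set" where
  "sub_c_shares P (M j v) = isw_b_shares (probed_rows j P) v"
| "sub_c_shares P (YW j i) = {}"
| "sub_c_shares P (ZW j i) = {i}"

lemma probed_rows_subset_shares:
  "probed_rows j P \<subseteq> (\<Union>w\<in>P. sub_x_shares w)"
  "probed_rows j P \<subseteq> (\<Union>w\<in>P. sub_c_shares P w)"
proof -
  have "probed_rows j P \<subseteq> (\<Union>w\<in>P. S w)"
    if "\<And>v. isw_rows v \<subseteq> S (M j v)" "\<And>i. i \<in> S (ZW j i)" for S
    unfolding probed_rows_def using that by (auto intro: UN_I)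
  then show "probed_rows j P \<subseteq> (\<Union>w\<in>P. sub_x_shares w)"
    "probed_rows j P \<subseteq> (\<Union>w\<in>P. sub_c_shares P w)"
    using isw_rows_subset_shares by simp_all
qed

lemma card_sub_shares_le:
  "card (sub_x_shares w) \<le> 1" "card (sub_y_shares w) \<le> 1" "card (sub_c_shares P w) \<le> 1"
  using card_isw_shares_le[unfolded One_nat_def] by (cases w; simp)+

lemma sub_shares_valid:
  assumes "sub_valid l n w"
  shows "sub_x_shares w \<subseteq> {..<n}" "sub_y_shares w \<subseteq> {..<n}" "sub_c_shares P w \<subseteq> {..<n}"
  using assms isw_shares_valid by (cases w; force simp: sub_valid_def)+

definition sub_correction ::
    "(nat \<Rightarrow> nat \<Rightarrow> 'a) \<Rightarrow> (nat \<Rightarrow> 'a) \<Rightarrow> (nat \<Rightarrow> nat \<Rightarrow> 'a) \<Rightarrow> (nat \<Rightarrow> 'a) \<Rightarrow> sub_wire set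
      \<Rightarrow> nat \<times> nat \<times> nat \<Rightarrow> 'a::field" where
  "sub_correction xs c xs' c' P =
    (\<lambda>(j, p, q). isw_correction (\<lambda>i. xs i j) c (\<lambda>i. xs' i j) c' (probed_rows j P) p q)"

lemma sub_val_translated_tape:
  fixes xs xs' ys ys' :: "nat \<Rightarrow> nat \<Rightarrow> 'a::field" and c c' :: "nat \<Rightarrow> 'a"
    and \<rho> :: "nat \<times> nat \<times> nat \<Rightarrow> 'a"
  assumes "w \<in> P" "sub_valid l n w"
    and agree_x: "\<forall>i\<in>(\<Union>w\<in>P. sub_x_shares w). \<forall>j<l. xs i j = xs' i j"
    and agree_y: "\<forall>i\<in>(\<Union>w\<in>P. sub_y_shares w). \<forall>j<l. ys i j = ys' i j"
    and agree_c: "\<forall>i\<in>(\<Union>w\<in>P. sub_c_shares P w). c i = c' i"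
  defines "\<rho>' \<equiv> translate_on {(j, i, k). j < l \<and> i < k \<and> k < n} (sub_correction xs c xs' c' P) \<rho>"
  shows "sub_val n xs' ys' c' \<rho>' w = sub_val n xs ys c \<rho> w"
proof -
  have instance_eq: "isw_val (\<lambda>i. xs' i j) c' (\<lambda>(i, k). \<rho>' (j, i, k)) v
      = isw_val (\<lambda>i. xs i j) c (\<lambda>(i, k). \<rho> (j, i, k)) v"
    if "j < l" "isw_valid n v" "isw_rows v \<subseteq> probed_rows j P"
      "isw_a_shares v \<subseteq> (\<Union>w\<in>P. sub_x_shares w)"
      "isw_b_shares (probed_rows j P) v \<subseteq> (\<Union>w\<in>P. sub_c_shares P w)" for j v
  proof (rule isw_val_corrected[of n])
    show "\<forall>p\<in>probed_rows j P. xs p j = xs' p j \<and> c p = c' p"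
      using probed_rows_subset_shares agree_x agree_c \<open>j < l\<close> by blast
  qed (use that agree_x agree_c in \<open>auto simp: \<rho>'_def translate_on_def sub_correction_def\<close>)
  show ?thesis
  proof (cases w)
    case (M j v)
    then have "M j v \<in> P" "j < l" "isw_valid n v"
      using assms(1,2) by (auto simp: sub_valid_def)
    moreover have "isw_rows v \<subseteq> probed_rows j P"
      using \<open>M j v \<in> P\<close> by (auto simp: probed_rows_def)
    moreover have "isw_a_shares v \<subseteq> (\<Union>w\<in>P. sub_x_shares w)"
      "isw_b_shares (probed_rows j P) v \<subseteq> (\<Union>w\<in>P. sub_c_shares P w)"
      using UN_upper[OF \<open>M j v \<in> P\<close>, of sub_x_shares] UN_upper[OF \<open>M j v \<in> P\<close>, of "sub_c_shares P"]
      by simp_all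
    ultimately show ?thesis
      using M instance_eq by simp
  next
    case (YW j i)
    then show ?thesis
      using assms(1,2) agree_y by (force simp: sub_valid_def)
  next
    case (ZW j i)
    then have "j < l" "i < n" "ys i j = ys' i j"
      using assms(1,2) agree_y by (force simp: sub_valid_def)+
    moreover have "isw_val (\<lambda>i. xs' i j) c' (\<lambda>(i, k). \<rho>' (j, i, k)) (IS i n)
        = isw_val (\<lambda>i. xs i j) c (\<lambda>(i, k). \<rho> (j, i, k)) (IS i n)"
      using ZW assms(1) \<open>j < l\<close> \<open>i < n\<close>
      by (intro instance_eq) (auto simp: isw_valid_def probed_rows_def intro!: bexI[of _ "ZW j i"])
    ultimately show ?thesis
      using ZW by simp
  qed
qed

lemma sub_obs_eq_if_shares_agree:
  fixes xs xs' ys ys' :: "nat \<Rightarrow> nat \<Rightarrow> 'a::{field,finite}" and c c' :: "nat \<Rightarrow> 'a"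
  assumes valid: "P \<subseteq> {w. sub_valid l n w}"
    and agree_x: "\<forall>i\<in>(\<Union>w\<in>P. sub_x_shares w). \<forall>j<l. xs i j = xs' i j"
    and agree_y: "\<forall>i\<in>(\<Union>w\<in>P. sub_y_shares w). \<forall>j<l. ys i j = ys' i j"
    and agree_c: "\<forall>i\<in>(\<Union>w\<in>P. sub_c_shares P w). c i = c' i"
  shows "sub_obs l n xs ys c P = sub_obs l n xs' ys' c' P"
proof -
  let ?\<tau> = "translate_on {(j, i, k). j < l \<and> i < k \<and> k < n} (sub_correction xs c xs' c' P)"
  have "sub_obs l n xs ys c P = map_pmf (\<lambda>\<rho>. \<lambda>w\<in>P. sub_val n xs' ys' c' (?\<tau> \<rho>) w) (sub_tape l n)"
    unfolding sub_obs_def using valid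
    by (intro map_pmf_cong refl restrict_ext sub_val_translated_tape[symmetric, OF _ _ agree_x agree_y agree_c]) auto
  also have "\<dots> = map_pmf (\<lambda>\<rho>. \<lambda>w\<in>P. sub_val n xs' ys' c' \<rho> w) (map_pmf ?\<tau> (sub_tape l n))"
    by (simp add: pmf.map_comp o_def)
  also have "map_pmf ?\<tau> (sub_tape l n) = sub_tape l n"
    by (rule map_pmf_translate_on_sub_tape)
  finally show ?thesis
    unfolding sub_obs_def .
qed

theorem SecMultSub_NI_any_order: "SecMultSub_NI TYPE('a::{field,finite}) l n t"
  unfolding SecMultSub_NI_def
proof (intro allI impI)
  fix P :: "sub_wire set"
  assume P: "finite P \<and> P \<subseteq> {w. sub_valid l n w} \<and> card P \<le> t"
  define Ix where "Ix = (\<Union>w\<in>P. sub_x_shares w)"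
  define Iy where "Iy = (\<Union>w\<in>P. sub_y_shares w)"
  define Ic where "Ic = (\<Union>w\<in>P. sub_c_shares P w)"
  define Sim :: "(nat \<Rightarrow> nat \<Rightarrow> 'a) \<Rightarrow> (nat \<Rightarrow> nat \<Rightarrow> 'a) \<Rightarrow> (nat \<Rightarrow> 'a) \<Rightarrow> (sub_wire \<Rightarrow> 'a) pmf"
    where "Sim xr yr cr = sub_obs l n (\<lambda>i j. if i \<in> Ix \<and> j < l then xr i j else 0)
      (\<lambda>i j. if i \<in> Iy \<and> j < l then yr i j else 0) (\<lambda>i. if i \<in> Ic then cr i else 0) P" for xr yr cr
  have "Ix \<subseteq> {..<n}" "Iy \<subseteq> {..<n}" "Ic \<subseteq> {..<n}"
    using P sub_shares_valid unfolding Ix_def Iy_def Ic_def by blast+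
  moreover have "card Ix \<le> card P" "card Iy \<le> card P" "card Ic \<le> card P"
    using P unfolding Ix_def Iy_def Ic_def by (intro card_UN_le_card card_sub_shares_le; simp)+
  moreover have "sub_obs l n xs ys c P =
      Sim (\<lambda>i\<in>Ix. \<lambda>j\<in>{..<l}. xs i j) (\<lambda>i\<in>Iy. \<lambda>j\<in>{..<l}. ys i j) (\<lambda>i\<in>Ic. c i)"
    for xs ys :: "nat \<Rightarrow> nat \<Rightarrow> 'a" and c
    unfolding Sim_def
    by (rule sub_obs_eq_if_shares_agree) (use P in \<open>auto simp: Ix_def Iy_def Ic_def\<close>)
  ultimately show "\<exists>Ix Iy Ic. Ix \<subseteq> {..<n} \<and> Iy \<subseteq> {..<n} \<and> Ic \<subseteq> {..<n} \<and>
      card Ix \<le> card P \<and> card Iy \<le> card P \<and> card Ic \<le> card P \<and>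
      (\<exists>Sim :: (nat \<Rightarrow> nat \<Rightarrow> 'a) \<Rightarrow> (nat \<Rightarrow> nat \<Rightarrow> 'a) \<Rightarrow> (nat \<Rightarrow> 'a) \<Rightarrow> (sub_wire \<Rightarrow> 'a) pmf.
        \<forall>(xs :: nat \<Rightarrow> nat \<Rightarrow> 'a) ys c. sub_obs l n xs ys c P =
          Sim (\<lambda>i\<in>Ix. \<lambda>j\<in>{..<l}. xs i j) (\<lambda>i\<in>Iy. \<lambda>j\<in>{..<l}. ys i j) (\<lambda>i\<in>Ic. c i))"
    by blast
qed

theorem lemma3:
  fixes t l :: nat
  assumes "t \<ge> 1"
  shows "SecMultSub_NI TYPE('a::{field,finite}) l (t + 1) t"
  by (rule SecMultSub_NI_any_order)

end
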